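(* Let $I$ be a nonempty set and let $\mathcal{M}_I$ be the Banach algebra whose underlying Banach space is $\ell^1(I\times I)$ with product $(ab)(i,j)=\sum_{k\in I}a(i,k)b(k,j)$ for $a,b\in\mathcal{M}_I$, $i,j\in I$. Regard $\ell^1(I)$ as a Banach $\mathcal{M}_I$-bimodule via $(a\cdot b)(i)=\sum_{k\in I}a(i,k)b(k)$ and $(b\cdot a)(i)=\sum_{k\in I}b(k)a(k,i)$ for $a\in\mathcal{M}_I$, $b\in\ell^1(I)$, $i\in I$. Then the map $\nu:\ell^1(I)\hat{\otimes}_{\mathcal{M}_I}\ell^1(I)\to\mathbb{C}$ determined by $\nu(a\otimes b)=\sum_{i\in I}a(i)b(i)$ is a well-defined isomorphism of Banach spaces (the first factor being regarded as a right and the second as a left $\mathcal{M}_I$-module).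
   Context: $\hat{\otimes}$ denotes the completed projective tensor product of Banach spaces. For a Banach algebra $A$, a right Banach $A$-module $E$ and a left Banach $A$-module $F$, the module tensor product $E\hat{\otimes}_A F$ is the quotient Banach space $(E\hat{\otimes}F)/N$, where $N$ is the closed linear span of $\{x\cdot a\otimes y-x\otimes a\cdot y: x\in E,\ y\in F,\ a\in A\}$. *)

theory Defs
  imports "HOL-Analysis.Analysis"
begin

text \<open>The index set I is modelled by an arbitrary type 'i (types are nonempty).
  l^1 over a type: absolutely summable complex functions.\<close>

definition l1 :: "('i \<Rightarrow> complex) set" where
  "l1 = {f. (\<lambda>i. norm (f i)) summable_on UNIV}"

definition l1norm :: "('i \<Rightarrow> complex) \<Rightarrow> real" where
  "l1norm f = (\<Sum>\<^sub>\<infinity>i. norm (f i))"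

text \<open>M_I = l^1(I x I) (i.e. l1 at type 'i x 'i); its actions on l^1(I).\<close>

definition mat_mult :: "('i \<times> 'i \<Rightarrow> complex) \<Rightarrow> ('i \<times> 'i \<Rightarrow> complex) \<Rightarrow> ('i \<times> 'i \<Rightarrow> complex)" where
  "mat_mult a b = (\<lambda>(i, j). \<Sum>\<^sub>\<infinity>k. a (i, k) * b (k, j))"

definition mact_left :: "('i \<times> 'i \<Rightarrow> complex) \<Rightarrow> ('i \<Rightarrow> complex) \<Rightarrow> ('i \<Rightarrow> complex)" where
  "mact_left a b = (\<lambda>i. \<Sum>\<^sub>\<infinity>k. a (i, k) * b k)"

definition mact_right :: "('i \<Rightarrow> complex) \<Rightarrow> ('i \<times> 'i \<Rightarrow> complex) \<Rightarrow> ('i \<Rightarrow> complex)" where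
  "mact_right b a = (\<lambda>i. \<Sum>\<^sub>\<infinity>k. b k * a (k, i))"

definition bbil :: "(('i \<Rightarrow> complex) \<Rightarrow> ('i \<Rightarrow> complex) \<Rightarrow> complex) \<Rightarrow> bool" where
  "bbil B \<longleftrightarrow>
     (\<forall>x\<in>l1. \<forall>x'\<in>l1. \<forall>y\<in>l1. \<forall>c. B (\<lambda>i. x i + c * x' i) y = B x y + c * B x' y) \<and>
     (\<forall>x\<in>l1. \<forall>y\<in>l1. \<forall>y'\<in>l1. \<forall>c. B x (\<lambda>i. y i + c * y' i) = B x y + c * B x y') \<and>
     (\<exists>K. \<forall>x\<in>l1. \<forall>y\<in>l1. norm (B x y) \<le> K * l1norm x * l1norm y)"

text \<open>Completed projective tensor product l^1(I) \<hat>\<otimes> l^1(I): every element is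
  u = \<Sum>n x_n \<otimes> y_n with \<Sum>n \<parallel>x_n\<parallel>\<parallel>y_n\<parallel> < \<infinity>; such a representation is a sequence of pairs.
  Two representations denote the same element iff they agree on all bounded bilinear
  forms (the dual of E \<hat>\<otimes> F); the projective norm is the infimum over representations.\<close>

type_synonym 'i rep = "nat \<Rightarrow> ('i \<Rightarrow> complex) \<times> ('i \<Rightarrow> complex)"

definition reps :: "'i rep set" where
  "reps = {r. (\<forall>n. fst (r n) \<in> l1 \<and> snd (r n) \<in> l1) \<and>
              summable (\<lambda>n. l1norm (fst (r n)) * l1norm (snd (r n)))}"

definition rep_eq :: "'i rep \<Rightarrow> 'i rep \<Rightarrow> bool" where
  "rep_eq r s \<longleftrightarrow> (\<forall>B. bbil B \<longrightarrow>
     (\<Sum>n. B (fst (r n)) (snd (r n))) = (\<Sum>n. B (fst (s n)) (snd (s n))))"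

definition pnorm :: "'i rep \<Rightarrow> real" where
  "pnorm r = Inf {(\<Sum>n. l1norm (fst (s n)) * l1norm (snd (s n))) | s. s \<in> reps \<and> rep_eq s r}"

definition rep_add :: "'i rep \<Rightarrow> 'i rep \<Rightarrow> 'i rep" where
  "rep_add r s = (\<lambda>n. if even n then r (n div 2) else s (n div 2))"

definition rep_scale :: "complex \<Rightarrow> 'i rep \<Rightarrow> 'i rep" where
  "rep_scale c r = (\<lambda>n. ((\<lambda>i. c * fst (r n) i), snd (r n)))"

definition rep_diff :: "'i rep \<Rightarrow> 'i rep \<Rightarrow> 'i rep" where
  "rep_diff r s = rep_add r (rep_scale (-1) s)"

definition rep_fin :: "(('i \<Rightarrow> complex) \<times> ('i \<Rightarrow> complex)) list \<Rightarrow> 'i rep" where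
  "rep_fin xs = (\<lambda>n. if n < length xs then xs ! n else ((\<lambda>_. 0), (\<lambda>_. 0)))"

text \<open>Linear span of {x\<cdot>a \<otimes> y - x \<otimes> a\<cdot>y}: finite combinations
  \<Sum>k c_k (x_k\<cdot>a_k \<otimes> y_k - x_k \<otimes> a_k\<cdot>y_k).\<close>

definition bal_term :: "complex \<times> ('i \<Rightarrow> complex) \<times> ('i \<times> 'i \<Rightarrow> complex) \<times> ('i \<Rightarrow> complex)
    \<Rightarrow> (('i \<Rightarrow> complex) \<times> ('i \<Rightarrow> complex)) list" where
  "bal_term t = (case t of (c, x, a, y) \<Rightarrow>
     [((\<lambda>i. c * mact_right x a i), y), ((\<lambda>i. - c * x i), mact_left a y)])"

definition bal_span :: "'i rep set" where
  "bal_span = {rep_fin (concat (map bal_term ts)) | ts.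
                 \<forall>(c, x, a, y) \<in> set ts. x \<in> l1 \<and> a \<in> l1 \<and> y \<in> l1}"

text \<open>N = closed linear span (closure w.r.t. the projective norm).\<close>

definition modN :: "'i rep \<Rightarrow> bool" where
  "modN r \<longleftrightarrow> r \<in> reps \<and> (\<forall>\<epsilon>>0. \<exists>s\<in>bal_span. pnorm (rep_diff r s) < \<epsilon>)"

text \<open>Quotient norm on l^1(I) \<hat>\<otimes>_{M_I} l^1(I) = (l^1 \<hat>\<otimes> l^1)/N; the class of r is
  the same as that of s iff modN (rep_diff r s).\<close>

definition qnorm :: "'i rep \<Rightarrow> real" where
  "qnorm r = Inf {pnorm (rep_diff r s) | s. s \<in> reps \<and> modN s}"

definition nu :: "'i rep \<Rightarrow> complex" where
  "nu r = (\<Sum>n. \<Sum>\<^sub>\<infinity>i. fst (r n) i * snd (r n) i)"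

end

theory Submission
  imports Defs
begin

(*
  Evaluating a representation \<open>\<Sum>n x\<^sub>n \<otimes> y\<^sub>n\<close> at the bounded bilinear form
  \<open>\<langle>x, y\<rangle> = \<Sum>i x(i) y(i)\<close> gives \<nu>; it is bounded by the projective norm and vanishes on
  the balanced span because \<open>\<langle>x\<cdot>a, y\<rangle> = \<langle>x, a\<cdot>y\<rangle>\<close> (Fubini), so it vanishes on N.
  Conversely, fix an index j and let a be the matrix whose only nonzero row is the j-th one,
  equal to x: then \<open>x \<otimes> y - \<langle>x, y\<rangle> \<delta>\<^sub>j \<otimes> \<delta>\<^sub>j = \<delta>\<^sub>j\<cdot>a \<otimes> y - \<delta>\<^sub>j \<otimes> a\<cdot>y\<close> is balanced.
  Hence modulo the balanced span a representation is equivalent to a small tail plus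
  \<open>c \<delta>\<^sub>j \<otimes> \<delta>\<^sub>j\<close>, c a partial sum of the series for \<nu>; if \<nu> = 0 this is small, so the
  representation lies in N.  The same identity gives the quotient-norm bound
  \<open>\<parallel>r\<parallel> \<le> |\<nu>(r)|\<close>, and \<open>\<nu>(\<delta>\<^sub>j \<otimes> \<delta>\<^sub>j) = 1\<close> gives surjectivity.
*)

lemma has_sum_if_eq: "((\<lambda>i. if i = j then (c::'a::{comm_monoid_add,t2_space}) else 0) has_sum c) UNIV"
  by (rule has_sum_finite_neutralI[of "{j}"]) auto

lemma summable_on_if_eq: "(\<lambda>i. if i = j then (c::'a::{comm_monoid_add,t2_space}) else 0) summable_on UNIV"
  using has_sum_if_eq unfolding summable_on_def by fast

lemma infsum_if_eq: "(\<Sum>\<^sub>\<infinity>i. if i = j then (c::'a::{comm_monoid_add,t2_space}) else 0) = c"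
  by (rule infsumI) (rule has_sum_if_eq)

lemma sums_interleave:
  fixes f g :: "nat \<Rightarrow> 'a::real_normed_vector"
  assumes "f sums a" "g sums b"
  shows "(\<lambda>n. if even n then f (n div 2) else g (n div 2)) sums (a + b)"
proof -
  have "(\<lambda>n. if even n then f (n div 2) else 0) sums a"
    using assms(1)
    by (subst sums_mono_reindex[of "\<lambda>n. 2 * n", symmetric])
       (auto simp: strict_mono_def elim!: evenE)
  moreover have "(\<lambda>n. if even n then 0 else g (n div 2)) sums b"
    using assms(2)
    by (subst sums_mono_reindex[of "\<lambda>n. 2 * n + 1", symmetric])
       (auto simp: strict_mono_def elim!: oddE)
  ultimately show ?thesis
    by (auto dest: sums_add simp: if_distrib cong: if_cong)
qed

lemma l1norm_nonneg: "0 \<le> l1norm x"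
  unfolding l1norm_def by (rule infsum_nonneg) simp

lemma l1_zero [simp]: "(\<lambda>_. 0) \<in> l1"
  by (simp add: l1_def)

lemma l1norm_zero [simp]: "l1norm (\<lambda>_. 0) = 0"
  by (simp add: l1norm_def)

lemma l1_cmult: "x \<in> l1 \<Longrightarrow> (\<lambda>i. c * x i) \<in> l1"
  unfolding l1_def by (simp add: norm_mult summable_on_cmult_right)

lemma l1norm_cmult: "l1norm (\<lambda>i. c * x i) = norm c * l1norm x"
  unfolding l1norm_def by (simp add: norm_mult infsum_cmult_right')

lemma norm_le_l1norm:
  assumes "x \<in> l1" shows "norm (x j) \<le> l1norm x"
proof -
  have "norm (x j) = (\<Sum>\<^sub>\<infinity>i. if i = j then norm (x j) else 0)"
    by (rule infsum_if_eq[symmetric])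
  also have "\<dots> \<le> l1norm x"
    unfolding l1norm_def using assms
    by (intro infsum_mono summable_on_if_eq) (auto simp: l1_def)
  finally show ?thesis .
qed

definition delta :: "'i \<Rightarrow> 'i \<Rightarrow> complex" where
  "delta j = (\<lambda>i. if i = j then 1 else 0)"

lemma norm_delta: "(\<lambda>i. norm (delta j i)) = (\<lambda>i. if i = j then 1 else 0)"
  by (auto simp: delta_def)

lemma l1_delta: "delta j \<in> l1"
  unfolding l1_def mem_Collect_eq norm_delta by (rule summable_on_if_eq)

lemma l1norm_delta: "l1norm (delta j) = 1"
  unfolding l1norm_def norm_delta by (rule infsum_if_eq)

definition l1_dot :: "('i \<Rightarrow> complex) \<Rightarrow> ('i \<Rightarrow> complex) \<Rightarrow> complex" where
  "l1_dot x y = (\<Sum>\<^sub>\<infinity>i. x i * y i)"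

lemma abs_summable_mult_l1:
  assumes "x \<in> l1" "y \<in> l1"
  shows "(\<lambda>i. norm (x i * y i)) summable_on UNIV"
proof (rule summable_on_comparison_test)
  show "(\<lambda>i. l1norm y * norm (x i)) summable_on UNIV"
    using assms(1) by (intro summable_on_cmult_right) (simp add: l1_def)
  show "norm (x i * y i) \<le> l1norm y * norm (x i)" for i
    using norm_le_l1norm[OF assms(2), of i]
    by (simp add: norm_mult mult.commute[of "l1norm y"] mult_left_mono)
qed simp

lemma summable_mult_l1: "x \<in> l1 \<Longrightarrow> y \<in> l1 \<Longrightarrow> (\<lambda>i. x i * y i) summable_on UNIV"
  by (rule abs_summable_summable) (rule abs_summable_mult_l1)

lemma norm_l1_dot_le:
  assumes x: "x \<in> l1" and y: "y \<in> l1"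
  shows "norm (l1_dot x y) \<le> l1norm x * l1norm y"
proof -
  have "norm (l1_dot x y) \<le> (\<Sum>\<^sub>\<infinity>i. norm (x i * y i))"
    unfolding l1_dot_def by (rule norm_infsum_bound) (rule abs_summable_mult_l1[OF x y])
  also have "\<dots> \<le> (\<Sum>\<^sub>\<infinity>i. norm (x i) * l1norm y)"
    using abs_summable_mult_l1[OF x y] x norm_le_l1norm[OF y]
    by (intro infsum_mono) (auto simp: l1_def norm_mult mult_left_mono intro!: summable_on_cmult_left)
  also have "\<dots> = l1norm x * l1norm y"
    by (simp add: infsum_cmult_left' l1norm_def)
  finally show ?thesis .
qed

lemma l1_dot_delta: "l1_dot (delta j) (delta j) = 1"
  unfolding l1_dot_def delta_def by (simp add: if_distrib infsum_if_eq cong: if_cong)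

lemma bbil_l1_dot: "bbil l1_dot"
  unfolding bbil_def
proof (intro conjI ballI allI)
  fix x x' y :: "'i \<Rightarrow> complex" and c assume "x \<in> l1" "x' \<in> l1" "y \<in> l1"
  then show "l1_dot (\<lambda>i. x i + c * x' i) y = l1_dot x y + c * l1_dot x' y"
    unfolding l1_dot_def distrib_right mult.assoc
    by (simp add: infsum_add infsum_cmult_right' summable_mult_l1 summable_on_cmult_right)
next
  fix x y y' :: "'i \<Rightarrow> complex" and c assume "x \<in> l1" "y \<in> l1" "y' \<in> l1"
  then show "l1_dot x (\<lambda>i. y i + c * y' i) = l1_dot x y + c * l1_dot x y'"
    unfolding l1_dot_def distrib_left mult.left_commute[of "x _"]
    by (simp add: infsum_add infsum_cmult_right' summable_mult_l1 summable_on_cmult_right)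
next
  show "\<exists>K. \<forall>x\<in>l1. \<forall>y\<in>l1. norm (l1_dot x y) \<le> K * l1norm x * l1norm y"
    by (intro exI[of _ 1]) (simp add: norm_l1_dot_le)
qed

lemma l1_row:
  assumes "a \<in> l1" shows "(\<lambda>k. a (i, k)) \<in> l1"
proof -
  have "(\<lambda>p. norm (a p)) summable_on range (Pair i)"
    using assms unfolding l1_def by (auto intro: summable_on_subset_banach)
  then show ?thesis
    by (subst (asm) summable_on_reindex) (auto simp: l1_def o_def inj_on_def)
qed

lemma l1_swap:
  assumes "a \<in> l1" shows "(\<lambda>p. a (prod.swap p)) \<in> l1"
proof -
  have "(\<lambda>p. norm (a p)) summable_on (prod.swap ` UNIV)"
    using assms by (simp add: l1_def)
  then show ?thesis
    by (subst (asm) summable_on_reindex) (auto simp: l1_def o_def)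
qed

lemma summable_on_row_l1norm:
  assumes "a \<in> l1" shows "(\<lambda>i. l1norm (\<lambda>k. a (i, k))) summable_on UNIV"
proof -
  have "(\<lambda>(i, k). norm (a (i, k))) summable_on UNIV \<times> UNIV"
    using assms by (simp add: l1_def split_beta')
  from summable_on_Sigma_banach[OF this] show ?thesis
    by (simp add: l1norm_def)
qed

lemma mact_left_eq_l1_dot: "mact_left a y i = l1_dot (\<lambda>k. a (i, k)) y"
  by (simp add: mact_left_def l1_dot_def)

lemma mact_right_eq_l1_dot: "mact_right x a i = l1_dot x (\<lambda>k. a (k, i))"
  by (simp add: mact_right_def l1_dot_def)

lemma l1_mact_left:
  assumes a: "a \<in> l1" and y: "y \<in> l1"
  shows "mact_left a y \<in> l1"
  unfolding l1_def mem_Collect_eq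
proof (rule summable_on_comparison_test)
  show "(\<lambda>i. l1norm (\<lambda>k. a (i, k)) * l1norm y) summable_on UNIV"
    by (intro summable_on_cmult_left summable_on_row_l1norm a)
  show "norm (mact_left a y i) \<le> l1norm (\<lambda>k. a (i, k)) * l1norm y" for i
    unfolding mact_left_eq_l1_dot by (rule norm_l1_dot_le[OF l1_row[OF a] y])
qed simp

lemma l1_mact_right:
  assumes x: "x \<in> l1" and a: "a \<in> l1"
  shows "mact_right x a \<in> l1"
  unfolding l1_def mem_Collect_eq
proof (rule summable_on_comparison_test)
  show "(\<lambda>i. l1norm x * l1norm (\<lambda>k. a (k, i))) summable_on UNIV"
    using summable_on_row_l1norm[OF l1_swap[OF a]] by (intro summable_on_cmult_right) simp
  show "norm (mact_right x a i) \<le> l1norm x * l1norm (\<lambda>k. a (k, i))" for i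
    using norm_l1_dot_le[OF x l1_row[OF l1_swap[OF a]]] by (simp add: mact_right_eq_l1_dot)
qed simp

lemma l1_dot_mact_right:
  assumes x: "x \<in> l1" and a: "a \<in> l1" and y: "y \<in> l1"
  shows "l1_dot (mact_right x a) y = l1_dot x (mact_left a y)"
proof -
  let ?f = "\<lambda>(k, i). x k * a (k, i) * y i"
  have "(\<lambda>p. norm (?f p)) summable_on UNIV \<times> UNIV"
  proof (rule summable_on_comparison_test)
    show "(\<lambda>p. l1norm x * l1norm y * norm (a p)) summable_on UNIV \<times> UNIV"
      using a by (intro summable_on_cmult_right) (simp add: l1_def)
    show "norm (?f p) \<le> l1norm x * l1norm y * norm (a p)" for p
    proof (cases p)
      case (Pair k i)
      have "norm (x k) * norm (y i) \<le> l1norm x * l1norm y"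
        by (intro mult_mono norm_le_l1norm x y) (auto simp: l1norm_nonneg)
      from mult_right_mono[OF this norm_ge_zero[of "a (k, i)"]] show ?thesis
        by (simp add: Pair norm_mult mult_ac)
    qed
  qed simp
  then have "?f summable_on UNIV \<times> UNIV"
    by (rule abs_summable_summable)
  then have "(\<Sum>\<^sub>\<infinity>i. \<Sum>\<^sub>\<infinity>k. x k * a (k, i) * y i) = (\<Sum>\<^sub>\<infinity>k. \<Sum>\<^sub>\<infinity>i. x k * a (k, i) * y i)"
    using infsum_swap_banach[of "\<lambda>k i. x k * a (k, i) * y i" UNIV UNIV] by simp
  moreover have "mact_right x a i * y i = (\<Sum>\<^sub>\<infinity>k. x k * a (k, i) * y i)" for i
    unfolding mact_right_def by (simp add: infsum_cmult_left')
  moreover have "x k * mact_left a y k = (\<Sum>\<^sub>\<infinity>i. x k * a (k, i) * y i)" for k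
    unfolding mact_left_def by (simp add: infsum_cmult_right' mult.assoc)
  ultimately show ?thesis
    by (simp add: l1_dot_def)
qed

definition row_mat :: "'i \<Rightarrow> ('i \<Rightarrow> complex) \<Rightarrow> ('i \<times> 'i \<Rightarrow> complex)" where
  "row_mat j x = (\<lambda>(k, i). if k = j then x i else 0)"

lemma l1_row_mat:
  assumes x: "x \<in> l1" shows "row_mat j x \<in> l1"
proof -
  let ?F = "\<lambda>p. norm (row_mat j x p)"
  have "?F summable_on range (Pair j)"
    using x by (subst summable_on_reindex) (auto simp: inj_on_def o_def l1_def row_mat_def)
  moreover have "?F summable_on range (Pair j) \<longleftrightarrow> ?F summable_on UNIV"
    by (rule summable_on_cong_neutral) (auto simp: row_mat_def)
  ultimately show ?thesis by (simp add: l1_def)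
qed

lemma mact_right_delta_row_mat: "mact_right (delta j) (row_mat j x) = x"
proof
  fix i
  have "(\<lambda>k. delta j k * row_mat j x (k, i)) = (\<lambda>k. if k = j then x i else 0)"
    by (auto simp: delta_def row_mat_def)
  then show "mact_right (delta j) (row_mat j x) i = x i"
    unfolding mact_right_def by (simp add: infsum_if_eq)
qed

lemma mact_left_row_mat: "mact_left (row_mat j x) y = (\<lambda>i. l1_dot x y * delta j i)"
  by (auto simp: mact_left_def l1_dot_def delta_def row_mat_def)

lemma bbil_linear_left:
  "bbil B \<Longrightarrow> x \<in> l1 \<Longrightarrow> x' \<in> l1 \<Longrightarrow> y \<in> l1 \<Longrightarrow> B (\<lambda>i. x i + c * x' i) y = B x y + c * B x' y"
  by (simp add: bbil_def)

lemma bbil_linear_right: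
  "bbil B \<Longrightarrow> x \<in> l1 \<Longrightarrow> y \<in> l1 \<Longrightarrow> y' \<in> l1 \<Longrightarrow> B x (\<lambda>i. y i + c * y' i) = B x y + c * B x y'"
  by (simp add: bbil_def)

lemma bbil_zero_left: "bbil B \<Longrightarrow> y \<in> l1 \<Longrightarrow> B (\<lambda>_. 0) y = 0"
  using bbil_linear_left[of B "\<lambda>_. 0" "\<lambda>_. 0" y 1] by simp

lemma bbil_zero_right: "bbil B \<Longrightarrow> x \<in> l1 \<Longrightarrow> B x (\<lambda>_. 0) = 0"
  using bbil_linear_right[of B x "\<lambda>_. 0" "\<lambda>_. 0" 1] by simp

lemma bbil_cmult_left: "bbil B \<Longrightarrow> x \<in> l1 \<Longrightarrow> y \<in> l1 \<Longrightarrow> B (\<lambda>i. c * x i) y = c * B x y"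
  using bbil_linear_left[of B "\<lambda>_. 0" x y c] bbil_zero_left[of B y] by simp

lemma bbil_cmult_right: "bbil B \<Longrightarrow> x \<in> l1 \<Longrightarrow> y \<in> l1 \<Longrightarrow> B x (\<lambda>i. c * y i) = c * B x y"
  using bbil_linear_right[of B x "\<lambda>_. 0" y c] bbil_zero_right[of B x] by simp

definition rep_eval :: "(('i \<Rightarrow> complex) \<Rightarrow> ('i \<Rightarrow> complex) \<Rightarrow> complex) \<Rightarrow> 'i rep \<Rightarrow> complex" where
  "rep_eval B r = (\<Sum>n. B (fst (r n)) (snd (r n)))"

definition rep_norm :: "'i rep \<Rightarrow> real" where
  "rep_norm r = (\<Sum>n. l1norm (fst (r n)) * l1norm (snd (r n)))"

lemma rep_eq_iff_rep_eval: "rep_eq r s \<longleftrightarrow> (\<forall>B. bbil B \<longrightarrow> rep_eval B r = rep_eval B s)"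
  by (simp add: rep_eq_def rep_eval_def)

lemma nu_eq_rep_eval: "nu = rep_eval l1_dot"
  by (simp add: fun_eq_iff nu_def rep_eval_def l1_dot_def)

lemma repsD:
  assumes "r \<in> reps"
  shows "fst (r n) \<in> l1" "snd (r n) \<in> l1" "summable (\<lambda>n. l1norm (fst (r n)) * l1norm (snd (r n)))"
  using assms by (auto simp: reps_def)

lemma rep_norm_sums: "r \<in> reps \<Longrightarrow> (\<lambda>n. l1norm (fst (r n)) * l1norm (snd (r n))) sums rep_norm r"
  unfolding rep_norm_def by (rule summable_sums) (rule repsD(3))

lemma rep_norm_nonneg: "r \<in> reps \<Longrightarrow> 0 \<le> rep_norm r"
  unfolding rep_norm_def by (rule suminf_nonneg) (auto simp: l1norm_nonneg repsD)

lemma summable_norm_rep_eval: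
  assumes B: "bbil B" and r: "r \<in> reps"
  shows "summable (\<lambda>n. norm (B (fst (r n)) (snd (r n))))"
proof -
  obtain K where K: "\<forall>x\<in>l1. \<forall>y\<in>l1. norm (B x y) \<le> K * l1norm x * l1norm y"
    using B unfolding bbil_def by blast
  show ?thesis
  proof (rule summable_comparison_test')
    show "summable (\<lambda>n. K * l1norm (fst (r n)) * l1norm (snd (r n)))"
      using summable_mult[OF repsD(3)[OF r], of K] by (simp add: mult.assoc)
    show "norm (norm (B (fst (r n)) (snd (r n)))) \<le> K * l1norm (fst (r n)) * l1norm (snd (r n))" for n
      using K repsD(1,2)[OF r] by simp
  qed
qed

lemma rep_eval_sums: "bbil B \<Longrightarrow> r \<in> reps \<Longrightarrow> (\<lambda>n. B (fst (r n)) (snd (r n))) sums rep_eval B r"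
  unfolding rep_eval_def
  by (rule summable_sums, rule summable_norm_cancel, rule summable_norm_rep_eval)

lemma norm_rep_eval_le:
  assumes B: "bbil B" and r: "r \<in> reps"
    and bound: "\<And>x y. x \<in> l1 \<Longrightarrow> y \<in> l1 \<Longrightarrow> norm (B x y) \<le> l1norm x * l1norm y"
  shows "norm (rep_eval B r) \<le> rep_norm r"
proof -
  have "norm (rep_eval B r) \<le> (\<Sum>n. norm (B (fst (r n)) (snd (r n))))"
    unfolding rep_eval_def by (rule summable_norm[OF summable_norm_rep_eval[OF B r]])
  also have "\<dots> \<le> rep_norm r"
    unfolding rep_norm_def using bound repsD[OF r]
    by (intro suminf_le summable_norm_rep_eval[OF B r]) auto
  finally show ?thesis .
qed

lemma sums_rep_add:
  fixes F :: "('i \<Rightarrow> complex) \<times> ('i \<Rightarrow> complex) \<Rightarrow> 'a::real_normed_vector"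
  assumes "(\<lambda>n. F (r n)) sums a" "(\<lambda>n. F (s n)) sums b"
  shows "(\<lambda>n. F (rep_add r s n)) sums (a + b)"
  using sums_interleave[OF assms] by (simp add: rep_add_def if_distrib)

lemma reps_rep_add:
  assumes r: "r \<in> reps" and s: "s \<in> reps"
  shows "rep_add r s \<in> reps"
  using sums_summable[OF sums_rep_add[OF rep_norm_sums[OF r] rep_norm_sums[OF s]]] repsD[OF r] repsD[OF s]
  by (auto simp: reps_def rep_add_def)

lemma rep_norm_rep_add: "r \<in> reps \<Longrightarrow> s \<in> reps \<Longrightarrow> rep_norm (rep_add r s) = rep_norm r + rep_norm s"
  unfolding rep_norm_def[of "rep_add r s"]
  by (rule sums_unique[symmetric]) (intro sums_rep_add rep_norm_sums)

lemma rep_eval_rep_add: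
  "bbil B \<Longrightarrow> r \<in> reps \<Longrightarrow> s \<in> reps \<Longrightarrow> rep_eval B (rep_add r s) = rep_eval B r + rep_eval B s"
  unfolding rep_eval_def[of B "rep_add r s"]
  by (rule sums_unique[symmetric]) (intro sums_rep_add rep_eval_sums)

lemma reps_rep_scale:
  assumes r: "r \<in> reps" shows "rep_scale c r \<in> reps"
  using summable_mult[OF repsD(3)[OF r], of "norm c"] repsD(1,2)[OF r]
  by (auto simp: reps_def rep_scale_def l1_cmult l1norm_cmult mult.assoc)

lemma rep_eval_rep_scale:
  assumes B: "bbil B" and r: "r \<in> reps"
  shows "rep_eval B (rep_scale c r) = c * rep_eval B r"
  using suminf_mult[OF sums_summable[OF rep_eval_sums[OF B r]], of c] repsD(1,2)[OF r]
  by (simp add: rep_eval_def rep_scale_def bbil_cmult_left[OF B])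

lemma reps_rep_diff: "r \<in> reps \<Longrightarrow> s \<in> reps \<Longrightarrow> rep_diff r s \<in> reps"
  unfolding rep_diff_def by (intro reps_rep_add reps_rep_scale)

lemma rep_eval_rep_diff:
  "bbil B \<Longrightarrow> r \<in> reps \<Longrightarrow> s \<in> reps \<Longrightarrow> rep_eval B (rep_diff r s) = rep_eval B r - rep_eval B s"
  by (simp add: rep_diff_def rep_eval_rep_add rep_eval_rep_scale reps_rep_scale)

lemma reps_rep_fin: "(\<And>p. p \<in> set xs \<Longrightarrow> fst p \<in> l1 \<and> snd p \<in> l1) \<Longrightarrow> rep_fin xs \<in> reps"
  unfolding reps_def
  by (auto simp: rep_fin_def split: if_splits intro!: summable_finite[of "{..<length xs}"])

lemma suminf_rep_fin:
  assumes "F ((\<lambda>_. 0), (\<lambda>_. 0)) = (0::'a::real_normed_vector)"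
  shows "(\<Sum>n. F (rep_fin xs n)) = sum_list (map F xs)"
proof -
  have "(\<Sum>n. F (rep_fin xs n)) = (\<Sum>n<length xs. F (rep_fin xs n))"
    using assms by (intro suminf_finite) (auto simp: rep_fin_def)
  also have "\<dots> = sum_list (map F xs)"
    by (simp add: sum_list_sum_nth atLeast0LessThan rep_fin_def)
  finally show ?thesis .
qed

lemma rep_eval_rep_fin: "bbil B \<Longrightarrow> rep_eval B (rep_fin xs) = sum_list (map (case_prod B) xs)"
  unfolding rep_eval_def using suminf_rep_fin[of "case_prod B"] by (simp add: bbil_zero_left split_beta)

lemma rep_norm_rep_fin: "rep_norm (rep_fin xs) = sum_list (map (\<lambda>(x, y). l1norm x * l1norm y) xs)"
  unfolding rep_norm_def using suminf_rep_fin[of "\<lambda>(x, y). l1norm x * l1norm y"] by (simp add: split_beta)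

lemma reps_shift: "r \<in> reps \<Longrightarrow> (\<lambda>n. r (n + N)) \<in> reps"
  by (auto simp: reps_def intro: summable_ignore_initial_segment)

lemma rep_eval_shift:
  assumes "bbil B" "r \<in> reps"
  shows "rep_eval B (\<lambda>n. r (n + N)) = rep_eval B r - (\<Sum>n<N. B (fst (r n)) (snd (r n)))"
  using suminf_split_initial_segment[OF sums_summable[OF rep_eval_sums[OF assms]], of N]
  by (simp add: rep_eval_def)

definition rep_delta :: "'i \<Rightarrow> complex \<Rightarrow> 'i rep" where
  "rep_delta j c = rep_fin [((\<lambda>i. c * delta j i), delta j)]"

lemma reps_rep_delta: "rep_delta j c \<in> reps"
  unfolding rep_delta_def by (rule reps_rep_fin) (auto simp: l1_delta l1_cmult)

lemma rep_eval_rep_delta: "bbil B \<Longrightarrow> rep_eval B (rep_delta j c) = c * B (delta j) (delta j)"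
  by (simp add: rep_delta_def rep_eval_rep_fin bbil_cmult_left l1_delta)

lemma rep_norm_rep_delta: "rep_norm (rep_delta j c) = norm c"
  by (simp add: rep_delta_def rep_norm_rep_fin l1norm_cmult l1norm_delta)

lemma nu_rep_delta: "nu (rep_delta j c) = c"
  by (simp add: nu_eq_rep_eval rep_eval_rep_delta bbil_l1_dot l1_dot_delta)

lemma norm_nu_le_rep_norm: "r \<in> reps \<Longrightarrow> norm (nu r) \<le> rep_norm r"
  unfolding nu_eq_rep_eval by (rule norm_rep_eval_le[OF bbil_l1_dot _ norm_l1_dot_le])

lemma pnorm_le_rep_norm: "s \<in> reps \<Longrightarrow> rep_eq s r \<Longrightarrow> pnorm r \<le> rep_norm s"
  unfolding pnorm_def
  by (rule cInf_lower) (auto simp: rep_norm_def[symmetric] intro!: bdd_belowI[of _ 0] rep_norm_nonneg)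

lemma le_pnorm:
  assumes "r \<in> reps" "\<And>s. s \<in> reps \<Longrightarrow> rep_eq s r \<Longrightarrow> P \<le> rep_norm s"
  shows "P \<le> pnorm r"
  unfolding pnorm_def
  by (rule cInf_greatest) (use assms in \<open>auto simp: rep_norm_def[symmetric] rep_eq_def\<close>)

lemma pnorm_nonneg: "r \<in> reps \<Longrightarrow> 0 \<le> pnorm r"
  by (rule le_pnorm) (auto intro: rep_norm_nonneg)

lemma norm_nu_le_pnorm: "r \<in> reps \<Longrightarrow> norm (nu r) \<le> pnorm r"
proof (rule le_pnorm)
  fix s assume "s \<in> reps" "rep_eq s r"
  then show "norm (nu r) \<le> rep_norm s"
    using norm_nu_le_rep_norm[of s] by (simp add: rep_eq_iff_rep_eval nu_eq_rep_eval bbil_l1_dot)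
qed

lemma l1_bal_term:
  assumes "x \<in> l1" "a \<in> l1" "y \<in> l1" "p \<in> set (bal_term (c, x, a, y))"
  shows "fst p \<in> l1 \<and> snd p \<in> l1"
  using assms l1_cmult[of x "-c"] by (auto simp: bal_term_def l1_cmult l1_mact_left l1_mact_right)

lemma reps_bal_span:
  assumes "b \<in> bal_span" shows "b \<in> reps"
proof -
  obtain ts where b: "b = rep_fin (concat (map bal_term ts))"
    and ts: "\<forall>(c, x, a, y) \<in> set ts. x \<in> l1 \<and> a \<in> l1 \<and> y \<in> l1"
    using assms unfolding bal_span_def by blast
  show ?thesis unfolding b
  proof (rule reps_rep_fin)
    fix p assume "p \<in> set (concat (map bal_term ts))"
    then obtain c x a y where t: "(c, x, a, y) \<in> set ts" and p: "p \<in> set (bal_term (c, x, a, y))"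
      by auto
    from t ts have "x \<in> l1" "a \<in> l1" "y \<in> l1" by auto
    then show "fst p \<in> l1 \<and> snd p \<in> l1" using p by (rule l1_bal_term)
  qed
qed

lemma rep_eval_bal_span:
  assumes "bbil B"
  shows "rep_eval B (rep_fin (concat (map bal_term ts))) = (\<Sum>t\<leftarrow>ts. sum_list (map (case_prod B) (bal_term t)))"
  unfolding rep_eval_rep_fin[OF assms] by (induct ts) auto

lemma l1_dot_bal_term:
  assumes "x \<in> l1" "a \<in> l1" "y \<in> l1"
  shows "sum_list (map (case_prod l1_dot) (bal_term (c, x, a, y))) = 0"
proof -
  have "l1_dot (\<lambda>i. c * mact_right x a i) y = c * l1_dot x (mact_left a y)"
    using assms by (simp add: bbil_cmult_left[OF bbil_l1_dot] l1_mact_right l1_dot_mact_right)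
  moreover have "l1_dot (\<lambda>i. - c * x i) (mact_left a y) = - c * l1_dot x (mact_left a y)"
    using assms by (intro bbil_cmult_left[OF bbil_l1_dot] l1_mact_left)
  ultimately show ?thesis by (simp add: bal_term_def)
qed

lemma nu_bal_span:
  assumes "b \<in> bal_span" shows "nu b = 0"
proof -
  obtain ts where b: "b = rep_fin (concat (map bal_term ts))"
    and ts: "\<forall>(c, x, a, y) \<in> set ts. x \<in> l1 \<and> a \<in> l1 \<and> y \<in> l1"
    using assms unfolding bal_span_def by blast
  have "(\<Sum>t\<leftarrow>ts. sum_list (map (case_prod l1_dot) (bal_term t))) = 0"
    using ts by (induct ts) (auto simp: l1_dot_bal_term)
  then show ?thesis
    by (simp add: b nu_eq_rep_eval rep_eval_bal_span[OF bbil_l1_dot])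
qed

lemma modN_imp_nu_eq_0:
  assumes w: "w \<in> reps" and "modN w"
  shows "nu w = 0"
proof (rule ccontr)
  assume "nu w \<noteq> 0"
  then have "norm (nu w) > 0" by simp
  with \<open>modN w\<close> obtain b where b: "b \<in> bal_span" and small: "pnorm (rep_diff w b) < norm (nu w)"
    unfolding modN_def by blast
  have br: "b \<in> reps" by (rule reps_bal_span[OF b])
  have "nu (rep_diff w b) = nu w"
    using nu_bal_span[OF b] by (simp add: nu_eq_rep_eval rep_eval_rep_diff[OF bbil_l1_dot w br])
  with norm_nu_le_pnorm[OF reps_rep_diff[OF w br]] small show False by simp
qed

lemma bal_term_row_mat_eval:
  assumes B: "bbil B" and x: "x \<in> l1" and y: "y \<in> l1"
  shows "sum_list (map (case_prod B) (bal_term (1, delta j, row_mat j x, y)))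
           = B x y - l1_dot x y * B (delta j) (delta j)"
proof -
  have "B (\<lambda>i. - 1 * delta j i) (\<lambda>i. l1_dot x y * delta j i) = - (l1_dot x y * B (delta j) (delta j))"
    using bbil_cmult_left[OF B l1_delta l1_cmult[OF l1_delta], of "- 1"]
      bbil_cmult_right[OF B l1_delta l1_delta, of _ "l1_dot x y"] by simp
  then show ?thesis
    by (simp add: bal_term_def mact_right_delta_row_mat mact_left_row_mat)
qed

lemma rep_eq_truncation:
  fixes w :: "'i rep" and N :: nat
  assumes w: "w \<in> reps"
  defines "c \<equiv> \<Sum>n<N. l1_dot (fst (w n)) (snd (w n))"
  shows "\<exists>b\<in>bal_span. rep_eq (rep_add (rep_delta j c) (\<lambda>n. w (n + N))) (rep_diff w b)"
proof -
  define ts where "ts = map (\<lambda>n. (1::complex, delta j, row_mat j (fst (w n)), snd (w n))) [0..<N]"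
  define b where "b = rep_fin (concat (map bal_term ts))"
  have bb: "b \<in> bal_span"
    unfolding bal_span_def b_def
  proof (intro CollectI exI conjI)
    show "\<forall>(c, x, a, y) \<in> set ts. x \<in> l1 \<and> a \<in> l1 \<and> y \<in> l1"
      using repsD[OF w] by (auto simp: ts_def l1_delta l1_row_mat)
  qed (rule refl)
  have br: "b \<in> reps" by (rule reps_bal_span[OF bb])
  have "rep_eq (rep_add (rep_delta j c) (\<lambda>n. w (n + N))) (rep_diff w b)"
    unfolding rep_eq_iff_rep_eval
  proof (intro allI impI)
    fix B :: "('i \<Rightarrow> complex) \<Rightarrow> ('i \<Rightarrow> complex) \<Rightarrow> complex" assume B: "bbil B"
    have "rep_eval B b = (\<Sum>n<N. B (fst (w n)) (snd (w n))) - c * B (delta j) (delta j)"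
      unfolding b_def rep_eval_bal_span[OF B] ts_def c_def
      by (simp add: o_def bal_term_row_mat_eval[OF B] repsD[OF w] sum_subtractf sum_distrib_right
          flip: sum_set_upt_conv_sum_list_nat atLeast0LessThan)
    then show "rep_eval B (rep_add (rep_delta j c) (\<lambda>n. w (n + N))) = rep_eval B (rep_diff w b)"
      using B w br
      by (simp add: rep_eval_rep_add rep_eval_rep_diff rep_eval_shift rep_eval_rep_delta reps_rep_delta reps_shift)
  qed
  with bb show ?thesis by blast
qed

lemma nu_eq_0_imp_modN:
  assumes w: "w \<in> reps" and "nu w = 0"
  shows "modN w"
  unfolding modN_def
proof (intro conjI allI impI w)
  fix \<epsilon> :: real assume "\<epsilon> > 0"
  let ?g = "\<lambda>n. l1_dot (fst (w n)) (snd (w n))"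
  let ?h = "\<lambda>n. l1norm (fst (w n)) * l1norm (snd (w n))"
  have "?g sums 0"
    using rep_eval_sums[OF bbil_l1_dot w] \<open>nu w = 0\<close> by (simp add: nu_eq_rep_eval)
  then obtain N1 where N1: "\<forall>n\<ge>N1. norm (\<Sum>k<n. ?g k) < \<epsilon>/2"
    using LIMSEQ_D[of "\<lambda>n. \<Sum>k<n. ?g k" 0 "\<epsilon>/2"] \<open>\<epsilon> > 0\<close> by (auto simp: sums_def)
  obtain N2 where N2: "\<forall>n\<ge>N2. norm (\<Sum>k. ?h (k + n)) < \<epsilon>/2"
    using suminf_exist_split[of "\<epsilon>/2" ?h] \<open>\<epsilon> > 0\<close> repsD(3)[OF w] by auto
  define N where "N = max N1 N2"
  define c where "c = (\<Sum>n<N. ?g n)"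
  define t where "t = rep_add (rep_delta undefined c) (\<lambda>n. w (n + N))"
  obtain b where b: "b \<in> bal_span" and "rep_eq t (rep_diff w b)"
    using rep_eq_truncation[OF w] unfolding t_def c_def by blast
  then have "pnorm (rep_diff w b) \<le> rep_norm t"
    by (intro pnorm_le_rep_norm) (simp add: t_def reps_rep_add reps_rep_delta reps_shift w)
  also have "rep_norm t = norm c + (\<Sum>k. ?h (k + N))"
    by (simp add: t_def rep_norm_rep_add rep_norm_rep_delta reps_rep_delta reps_shift w
        rep_norm_def[of "\<lambda>n. w (n + N)"])
  also have "\<dots> < \<epsilon>"
  proof -
    have "norm c < \<epsilon>/2" using N1 by (simp add: c_def N_def)
    moreover have "norm (\<Sum>k. ?h (k + N)) < \<epsilon>/2" using N2 by (simp add: N_def)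
    then have "(\<Sum>k. ?h (k + N)) < \<epsilon>/2" by simp
    ultimately show ?thesis by simp
  qed
  finally show "\<exists>s\<in>bal_span. pnorm (rep_diff w s) < \<epsilon>" using b by blast
qed

lemma modN_rep_diff_iff:
  assumes r: "r \<in> reps" and s: "s \<in> reps"
  shows "modN (rep_diff r s) \<longleftrightarrow> nu r = nu s"
proof -
  have "modN (rep_diff r s) \<longleftrightarrow> nu (rep_diff r s) = 0"
    using modN_imp_nu_eq_0 nu_eq_0_imp_modN reps_rep_diff[OF r s] by blast
  moreover have "nu (rep_diff r s) = nu r - nu s"
    unfolding nu_eq_rep_eval by (rule rep_eval_rep_diff[OF bbil_l1_dot r s])
  ultimately show ?thesis by simp
qed

lemma nu_rep_add_rep_scale:
  "r \<in> reps \<Longrightarrow> s \<in> reps \<Longrightarrow> nu (rep_add r (rep_scale c s)) = nu r + c * nu s"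
  by (simp add: nu_eq_rep_eval rep_eval_rep_add rep_eval_rep_scale reps_rep_scale bbil_l1_dot)

lemma norm_nu_le_qnorm:
  assumes r: "r \<in> reps" shows "norm (nu r) \<le> qnorm r"
  unfolding qnorm_def
proof (rule cInf_greatest)
  show "{pnorm (rep_diff r s) |s. s \<in> reps \<and> modN s} \<noteq> {}"
    using r modN_rep_diff_iff[OF r r] reps_rep_diff[OF r r] by blast
next
  fix p assume "p \<in> {pnorm (rep_diff r s) |s. s \<in> reps \<and> modN s}"
  then obtain s where s: "s \<in> reps" "modN s" and p: "p = pnorm (rep_diff r s)" by blast
  have "nu (rep_diff r s) = nu r"
    using modN_imp_nu_eq_0[OF s] by (simp add: nu_eq_rep_eval rep_eval_rep_diff[OF bbil_l1_dot r s(1)])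
  then show "norm (nu r) \<le> p"
    using norm_nu_le_pnorm[OF reps_rep_diff[OF r s(1)]] p by simp
qed

lemma qnorm_le_norm_nu:
  fixes r :: "'i rep"
  assumes r: "r \<in> reps" shows "qnorm r \<le> norm (nu r)"
proof -
  define t where "t = rep_delta (undefined :: 'i) (nu r)"
  have t: "t \<in> reps" by (simp add: t_def reps_rep_delta)
  define s where "s = rep_diff r t"
  have s: "s \<in> reps" "modN s"
    using modN_rep_diff_iff[OF r t] reps_rep_diff[OF r t] by (simp_all add: s_def t_def nu_rep_delta)
  have "qnorm r \<le> pnorm (rep_diff r s)"
    unfolding qnorm_def
  proof (rule cInf_lower)
    show "pnorm (rep_diff r s) \<in> {pnorm (rep_diff r s) |s. s \<in> reps \<and> modN s}"
      using s by blast
    show "bdd_below {pnorm (rep_diff r s) |s. s \<in> reps \<and> modN s}"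
      by (rule bdd_belowI[of _ 0]) (auto intro!: pnorm_nonneg reps_rep_diff r)
  qed
  also have "pnorm (rep_diff r s) \<le> rep_norm t"
    using t s(1) r
    by (intro pnorm_le_rep_norm) (simp_all add: rep_eq_iff_rep_eval s_def rep_eval_rep_diff reps_rep_diff)
  also have "rep_norm t = norm (nu r)"
    by (simp add: t_def rep_norm_rep_delta)
  finally show ?thesis .
qed

theorem lemma1:
  shows "(\<forall>r\<in>(reps :: 'i rep set). \<forall>s\<in>reps. modN (rep_diff r s) \<longleftrightarrow> nu r = nu s) \<and>
         (\<forall>r\<in>(reps :: 'i rep set). \<forall>s\<in>reps. \<forall>c.
             nu (rep_add r (rep_scale c s)) = nu r + c * nu s) \<and>
         (\<exists>C>0. \<forall>r\<in>(reps :: 'i rep set). norm (nu r) \<le> C * qnorm r) \<and>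
         (\<exists>C>0. \<forall>r\<in>(reps :: 'i rep set). qnorm r \<le> C * norm (nu r)) \<and>
         (\<forall>z. \<exists>r\<in>(reps :: 'i rep set). nu r = z)"
proof (intro conjI)
  show "\<forall>r\<in>(reps :: 'i rep set). \<forall>s\<in>reps. modN (rep_diff r s) \<longleftrightarrow> nu r = nu s"
    using modN_rep_diff_iff by blast
  show "\<forall>r\<in>(reps :: 'i rep set). \<forall>s\<in>reps. \<forall>c. nu (rep_add r (rep_scale c s)) = nu r + c * nu s"
    using nu_rep_add_rep_scale by blast
  show "\<exists>C>0. \<forall>r\<in>(reps :: 'i rep set). norm (nu r) \<le> C * qnorm r"
    using norm_nu_le_qnorm by (intro exI[of _ 1]) auto
  show "\<exists>C>0. \<forall>r\<in>(reps :: 'i rep set). qnorm r \<le> C * norm (nu r)"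
    using qnorm_le_norm_nu by (intro exI[of _ 1]) auto
  show "\<forall>z. \<exists>r\<in>(reps :: 'i rep set). nu r = z"
    using reps_rep_delta nu_rep_delta by metis
qed

end
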